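(* Let $\Omega\subseteq\mathbb{R}^N$ be open and bounded, let $\eta$ and $T$ be as in the context (with zero set of $\eta$ equal to $\partial\Omega$), and let $f\in BV_{loc}(\Omega)$ with distributional derivative $Df$ (an $\mathbb{R}^N$-valued locally finite Radon measure). Then $Tf\in C^\infty(\Omega)$ and, writing gradients as row vectors, for every $x\in\Omega$ $$\nabla Tf(x)=C(x)\int_\Omega\rho\Big(\frac{x-y}{\eta(x)}\Big)\,dDf(y)+C(x)\frac{\nabla\eta(x)}{\eta(x)}\int_\Omega\rho\Big(\frac{x-y}{\eta(x)}\Big)(y-x)\cdot dDf(y),$$ where $C(x)=M_\rho/\eta(x)^N$.
   Context: $\rho\in C_c^\infty(\mathbb{R}^N)$ satisfies $0\le\rho\le1$, $\rho(x)=0$ iff $|x|\ge1$, $\rho$ is radially symmetric, and $\rho(x)\ge\rho(1/2)$ for all $|x|<1/2$. Set $M_\rho:=(\int_{B_1(0)}\rho(y)\,dy)^{-1}$. Let $\eta\in C^\infty(\mathbb{R}^N)$ be non-negative with $\eta^{-1}(\{0\})=\partial\Omega$, all derivatives of $\eta$ vanishing on $\partial\Omega$, and $\eta(x)<\mathrm{dist}(x,\partial\Omega)$ for every $x\notin\partial\Omega$. For $f\in L^1_{loc}(\Omega)$ and $x\in\Omega$ define $Tf(x):=C(x)\int_\Omega\rho\big(\frac{x-y}{\eta(x)}\big)f(y)\,dy$ with $C(x):=M_\rho/\eta(x)^N$ (equivalently $Tf(x)=M_\rho\int_{B_1(0)}\rho(z)f(x-\eta(x)z)\,dz$). *)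

theory Defs
  imports "HOL-Analysis.Analysis"
begin

text \<open>Iterated partial derivatives along a list of directions (innermost derivative = last list element).\<close>
fun iter_partial :: "'a::euclidean_space list \<Rightarrow> ('a \<Rightarrow> real) \<Rightarrow> 'a \<Rightarrow> real" where
  "iter_partial [] g = g"
| "iter_partial (v # vs) g = (\<lambda>x. frechet_derivative (iter_partial vs g) (at x) v)"

definition smooth_on :: "'a::euclidean_space set \<Rightarrow> ('a \<Rightarrow> real) \<Rightarrow> bool" where
  "smooth_on S g \<longleftrightarrow> (\<forall>vs \<in> lists Basis. iter_partial vs g differentiable_on S)"

definition gradient :: "('a::euclidean_space \<Rightarrow> real) \<Rightarrow> 'a \<Rightarrow> 'a" where
  "gradient g x = (\<Sum>i\<in>Basis. frechet_derivative g (at x) i *\<^sub>R i)"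

definition mollifier :: "('a::euclidean_space \<Rightarrow> real) \<Rightarrow> bool" where
  "mollifier \<rho> \<longleftrightarrow> smooth_on UNIV \<rho>
     \<and> (\<forall>x. 0 \<le> \<rho> x \<and> \<rho> x \<le> 1)
     \<and> (\<forall>x. \<rho> x = 0 \<longleftrightarrow> norm x \<ge> 1)
     \<and> (\<forall>x y. norm x = norm y \<longrightarrow> \<rho> x = \<rho> y)
     \<and> (\<forall>x y. norm x < 1/2 \<longrightarrow> norm y = 1/2 \<longrightarrow> \<rho> x \<ge> \<rho> y)"

definition M_rho :: "('a::euclidean_space \<Rightarrow> real) \<Rightarrow> real" where
  "M_rho \<rho> = inverse (LINT y:ball 0 1|lebesgue. \<rho> y)"

definition reg_dist :: "'a::euclidean_space set \<Rightarrow> ('a \<Rightarrow> real) \<Rightarrow> bool" where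
  "reg_dist \<Omega> \<eta> \<longleftrightarrow> smooth_on UNIV \<eta>
     \<and> (\<forall>x. 0 \<le> \<eta> x)
     \<and> {x. \<eta> x = 0} = frontier \<Omega>
     \<and> (\<forall>vs \<in> lists Basis. \<forall>x \<in> frontier \<Omega>. iter_partial vs \<eta> x = 0)
     \<and> (\<forall>x. x \<notin> frontier \<Omega> \<longrightarrow> \<eta> x < infdist x (frontier \<Omega>))"

definition C_coef :: "('a::euclidean_space \<Rightarrow> real) \<Rightarrow> ('a \<Rightarrow> real) \<Rightarrow> 'a \<Rightarrow> real" where
  "C_coef \<rho> \<eta> x = M_rho \<rho> / \<eta> x ^ DIM('a)"

definition T_op :: "'a::euclidean_space set \<Rightarrow> ('a \<Rightarrow> real) \<Rightarrow> ('a \<Rightarrow> real) \<Rightarrow> ('a \<Rightarrow> real) \<Rightarrow> 'a \<Rightarrow> real" where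
  "T_op \<Omega> \<rho> \<eta> f x = C_coef \<rho> \<eta> x * (LINT y:\<Omega>|lebesgue. \<rho> ((1 / \<eta> x) *\<^sub>R (x - y)) * f y)"

definition test_fun :: "'a::euclidean_space set \<Rightarrow> ('a \<Rightarrow> real) \<Rightarrow> bool" where
  "test_fun \<Omega> \<phi> \<longleftrightarrow> smooth_on UNIV \<phi> \<and> compact (closure {x. \<phi> x \<noteq> 0})
     \<and> closure {x. \<phi> x \<noteq> 0} \<subseteq> \<Omega>"

text \<open>f in BV_loc(Omega) with distributional derivative Df = \<sigma> \<mu> (polar decomposition):
  \<mu> a locally finite (hence Radon) Borel measure on Omega (= |Df|), \<sigma> a Borel unit vector field.\<close>
definition BV_loc_with_deriv ::
  "'a::euclidean_space set \<Rightarrow> ('a \<Rightarrow> real) \<Rightarrow> 'a measure \<Rightarrow> ('a \<Rightarrow> 'a) \<Rightarrow> bool" where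
  "BV_loc_with_deriv \<Omega> f \<mu> \<sigma> \<longleftrightarrow>
     (\<forall>K. compact K \<and> K \<subseteq> \<Omega> \<longrightarrow> set_integrable lebesgue K f)
     \<and> sets \<mu> = sets borel
     \<and> (\<forall>K. compact K \<and> K \<subseteq> \<Omega> \<longrightarrow> emeasure \<mu> K < \<infinity>)
     \<and> \<sigma> \<in> borel_measurable borel
     \<and> (\<forall>y\<in>\<Omega>. norm (\<sigma> y) = 1)
     \<and> (\<forall>\<phi> i. test_fun \<Omega> \<phi> \<and> i \<in> Basis \<longrightarrow>
          (LINT x:\<Omega>|lebesgue. f x * frechet_derivative \<phi> (at x) i)
          = - (LINT y:\<Omega>|\<mu>. \<phi> y * (\<sigma> y \<bullet> i)))"

end

theory Submission
  imports Defs
begin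

text \<open>
  Write \<open>T f x = \<integral> K(x, y) f(y) dy\<close> with \<open>K(x, y) = C(x) \<rho>((x - y) / \<eta>(x))\<close>.
  The kernel is smooth on \<open>\<Omega> \<times> R\<^sup>N\<close> and, because \<open>\<eta>(x) < dist(x, \<partial>\<Omega>)\<close>, locally in \<open>x\<close>
  it vanishes for \<open>y\<close> outside a fixed compact subset of \<open>\<Omega>\<close>. Differentiating under the integral
  sign therefore needs only local integrability of \<open>f\<close>, and the \<open>x\<close>-derivatives of \<open>K\<close> are
  kernels of the same kind; iterating, \<open>T f\<close> is smooth.

  For the gradient formula fix \<open>x\<close>, let \<open>e = \<eta>(x)\<close> and \<open>\<phi>(y) = \<rho>((x - y) / e)\<close>. The chain
  rule shows that the \<open>x\<close>-derivative of the kernel is a \<open>y\<close>-divergence of test functions: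
  \<open>\<partial>K(x, y)/\<partial>x\<^sub>i = - C(x) \<partial>\<^sub>i\<phi>(y) - C(x) \<partial>\<^sub>i\<eta>(x) / e \<Sum>\<^sub>j \<partial>\<^sub>j(\<phi>(y) (y\<^sub>j - x\<^sub>j))\<close>.
  Integrated against \<open>f\<close>, the definition of the distributional derivative moves every
  derivative onto \<open>Df\<close>, which gives the two integrals of the formula.
\<close>

section \<open>Partial derivatives and gradients\<close>

definition partial_deriv :: "('a::euclidean_space \<Rightarrow> real) \<Rightarrow> 'a \<Rightarrow> 'a \<Rightarrow> real" where
  "partial_deriv g v x = frechet_derivative g (at x) v"

lemma iter_partial_snoc: "iter_partial (vs @ [v]) g = iter_partial vs (partial_deriv g v)"
  by (induction vs) (simp_all add: partial_deriv_def[abs_def])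

lemma partial_deriv_at:
  assumes "(g has_derivative D) (at x)"
  shows "partial_deriv g v x = D v"
  using frechet_derivative_at[OF assms] by (simp add: partial_deriv_def)

(* No differentiability is needed: both sides choose by SOME from the same set of derivatives. *)
lemma partial_deriv_cong_open:
  assumes "open S" "x \<in> S" "\<And>y. y \<in> S \<Longrightarrow> f y = g y"
  shows "partial_deriv f v x = partial_deriv g v x"
proof -
  have "(f has_derivative D) (at x) \<longleftrightarrow> (g has_derivative D) (at x)" for D
    by (metis assms has_derivative_transform_within_open)
  then show ?thesis
    by (simp add: partial_deriv_def frechet_derivative_def)
qed

lemma partial_deriv_eq_0_open:
  assumes "open S" "x \<in> S" "\<And>y. y \<in> S \<Longrightarrow> g y = 0"
  shows "partial_deriv g v x = 0"
  using partial_deriv_cong_open[OF assms] partial_deriv_at[OF has_derivative_const] by simp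

lemma linear_real_eq_sum_Basis:
  fixes D :: "'a::euclidean_space \<Rightarrow> real"
  assumes "linear D"
  shows "D h = (\<Sum>i\<in>Basis. (h \<bullet> i) * D i)"
  using Linear_Algebra.linear_componentwise[OF assms, of h 1] by simp

lemma partial_deriv_add:
  assumes "f differentiable at x" "g differentiable at x"
  shows "partial_deriv (\<lambda>x. f x + g x) v x = partial_deriv f v x + partial_deriv g v x"
  using partial_deriv_at[OF has_derivative_add[OF assms[THEN frechet_derivative_works[THEN iffD1]]]]
  by (simp add: partial_deriv_def)

lemma partial_deriv_mult:
  assumes "f differentiable at x" "g differentiable at x"
  shows "partial_deriv (\<lambda>x. f x * g x) v x = partial_deriv f v x * g x + f x * partial_deriv g v x"
  using partial_deriv_at[OF has_derivative_mult[OF assms[THEN frechet_derivative_works[THEN iffD1]]]]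
  by (simp add: partial_deriv_def)

lemma partial_deriv_compose:
  fixes G :: "'a::euclidean_space \<Rightarrow> 'b::euclidean_space"
  assumes "G differentiable at x" "g differentiable at (G x)"
  shows "partial_deriv (\<lambda>x. g (G x)) v x
      = (\<Sum>j\<in>Basis. partial_deriv g j (G x) * partial_deriv (\<lambda>x. G x \<bullet> j) v x)"
proof -
  obtain DG Dg where G: "(G has_derivative DG) (at x)" and g: "(g has_derivative Dg) (at (G x))"
    using assms unfolding differentiable_def by blast
  have "partial_deriv (\<lambda>x. g (G x)) v x = Dg (DG v)"
    using partial_deriv_at[OF diff_chain_at[OF G g]] by (simp add: o_def)
  also have "\<dots> = (\<Sum>j\<in>Basis. (DG v \<bullet> j) * Dg j)"
    by (rule linear_real_eq_sum_Basis[OF has_derivative_linear[OF g]])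
  finally show ?thesis
    using partial_deriv_at[OF g] partial_deriv_at[OF has_derivative_inner_left[OF G]]
    by (simp add: mult.commute)
qed

lemma
  fixes \<Phi> :: "'a::euclidean_space \<times> 'b::euclidean_space \<Rightarrow> real"
  assumes "\<Phi> differentiable at (x, y)"
  shows differentiable_at_fst: "(\<lambda>x. \<Phi> (x, y)) differentiable at x"
    and partial_deriv_fst: "partial_deriv (\<lambda>x. \<Phi> (x, y)) v x = partial_deriv \<Phi> (v, 0) (x, y)"
proof -
  obtain D where D: "(\<Phi> has_derivative D) (at (x, y))"
    using assms unfolding differentiable_def by blast
  have "((\<lambda>x. (x, y)) has_derivative (\<lambda>h. (h, 0))) (at x)"
    by (intro has_derivative_Pair has_derivative_ident has_derivative_const)
  from diff_chain_at[OF this D] have slice: "((\<lambda>x. \<Phi> (x, y)) has_derivative (\<lambda>h. D (h, 0))) (at x)"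
    by (simp add: o_def)
  then show "(\<lambda>x. \<Phi> (x, y)) differentiable at x"
    unfolding differentiable_def by blast
  show "partial_deriv (\<lambda>x. \<Phi> (x, y)) v x = partial_deriv \<Phi> (v, 0) (x, y)"
    using partial_deriv_at[OF slice] partial_deriv_at[OF D] by simp
qed

lemma sum_partial_deriv_radial:
  fixes g :: "'a::euclidean_space \<Rightarrow> real"
  assumes "(g has_derivative D) (at y)"
  shows "(\<Sum>j\<in>Basis. partial_deriv (\<lambda>y. g y * ((y - x) \<bullet> j)) j y) = real DIM('a) * g y + D (y - x)"
proof -
  have "partial_deriv (\<lambda>y. g y * ((y - x) \<bullet> j)) j y = g y + ((y - x) \<bullet> j) * D j" if "j \<in> Basis" for j
  proof -
    have "((\<lambda>y. (y - x) \<bullet> j) has_derivative (\<lambda>h. h \<bullet> j)) (at y)"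
      by (auto intro!: derivative_eq_intros)
    from partial_deriv_at[OF has_derivative_mult[OF assms this]] show ?thesis
      using that by simp
  qed
  then show ?thesis
    using linear_real_eq_sum_Basis[OF has_derivative_linear[OF assms], of "y - x"]
    by (simp add: sum.distrib)
qed

lemma gradient_inner:
  assumes "(g has_derivative D) (at x)"
  shows "gradient g x \<bullet> h = D h"
proof -
  have "gradient g x \<bullet> h = (\<Sum>i\<in>Basis. D i * (i \<bullet> h))"
    unfolding gradient_def frechet_derivative_at[OF assms, symmetric]
        inner_sum_left inner_scaleR_left ..
  also have "\<dots> = (\<Sum>i\<in>Basis. (h \<bullet> i) * D i)"
    by (intro sum.cong refl) (metis inner_commute mult.commute)
  also have "\<dots> = D h"
    by (rule linear_real_eq_sum_Basis[OF has_derivative_linear[OF assms], symmetric])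
  finally show ?thesis .
qed

lemma has_derivative_gradient:
  "g differentiable at x \<Longrightarrow> (g has_derivative (\<lambda>h. gradient g x \<bullet> h)) (at x)"
  using frechet_derivative_works gradient_inner by fastforce

lemma gradient_inner_Basis: "i \<in> Basis \<Longrightarrow> gradient g x \<bullet> i = partial_deriv g i x"
  by (simp add: gradient_def partial_deriv_def inner_sum_left_Basis)

lemma gradient_fst:
  fixes \<Phi> :: "'a::euclidean_space \<times> 'b::euclidean_space \<Rightarrow> real"
  assumes "\<Phi> differentiable at (x, y)"
  shows "gradient (\<lambda>x. \<Phi> (x, y)) x = (\<Sum>i\<in>Basis. partial_deriv \<Phi> (i, 0) (x, y) *\<^sub>R i)"
  using partial_deriv_fst[OF assms] by (simp add: gradient_def partial_deriv_def)

section \<open>Differentiability up to a finite order\<close>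

definition differentiable_up_to :: "nat \<Rightarrow> 'a::euclidean_space set \<Rightarrow> ('a \<Rightarrow> real) \<Rightarrow> bool" where
  "differentiable_up_to k S g \<longleftrightarrow>
     (\<forall>vs\<in>lists Basis. length vs < k \<longrightarrow> iter_partial vs g differentiable_on S)"

lemma differentiable_up_to_0 [simp]: "differentiable_up_to 0 S g"
  by (simp add: differentiable_up_to_def)

lemma differentiable_up_to_Suc:
  "differentiable_up_to (Suc k) S g \<longleftrightarrow>
     g differentiable_on S \<and> (\<forall>i\<in>Basis. differentiable_up_to k S (partial_deriv g i))"
  (is "?L \<longleftrightarrow> ?R")
proof
  assume L: ?L
  have "g differentiable_on S"
    using L unfolding differentiable_up_to_def by (drule_tac bspec[of _ _ "[]"]) auto
  moreover have "differentiable_up_to k S (partial_deriv g i)" if "i \<in> Basis" for i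
    using L that unfolding differentiable_up_to_def by (auto simp flip: iter_partial_snoc)
  ultimately show ?R by blast
next
  assume ?R
  show ?L
    unfolding differentiable_up_to_def
  proof (intro ballI impI)
    fix vs :: "'a list"
    assume "vs \<in> lists Basis" "length vs < Suc k"
    then show "iter_partial vs g differentiable_on S"
      using \<open>?R\<close> by (cases vs rule: rev_cases) (auto simp: differentiable_up_to_def iter_partial_snoc)
  qed
qed

lemma smooth_on_iff_differentiable_up_to: "smooth_on S g \<longleftrightarrow> (\<forall>k. differentiable_up_to k S g)"
  unfolding smooth_on_def differentiable_up_to_def by (meson lessI)

lemma differentiable_up_to_mono: "differentiable_up_to k S g \<Longrightarrow> j \<le> k \<Longrightarrow> differentiable_up_to j S g"
  unfolding differentiable_up_to_def by auto

lemma differentiable_up_to_imp_differentiable_at: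
  "differentiable_up_to (Suc k) S g \<Longrightarrow> open S \<Longrightarrow> x \<in> S \<Longrightarrow> g differentiable at x"
  by (simp add: differentiable_up_to_Suc differentiable_on_eq_differentiable_at)

lemma differentiable_up_to_cong:
  assumes "open S" "\<And>x. x \<in> S \<Longrightarrow> f x = g x" "differentiable_up_to k S f"
  shows "differentiable_up_to k S g"
  using assms(2,3)
proof (induction k arbitrary: f g)
  case (Suc k)
  have "g differentiable_on S"
    using Suc.prems unfolding differentiable_up_to_Suc differentiable_on_def
    by (metis differentiable_transform_within zero_less_one)
  moreover have "differentiable_up_to k S (partial_deriv g i)" if "i \<in> Basis" for i
    using Suc.IH[of "partial_deriv f i"] Suc.prems that partial_deriv_cong_open[OF assms(1)]
    unfolding differentiable_up_to_Suc by metis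
  ultimately show ?case
    by (simp add: differentiable_up_to_Suc)
qed simp

lemma differentiable_up_to_const: "differentiable_up_to k (S :: 'a::euclidean_space set) (\<lambda>x. c)"
proof (induction k arbitrary: c)
  case (Suc k)
  have "partial_deriv (\<lambda>x. c) i = (\<lambda>x. 0)" for i :: 'a
    using partial_deriv_at[OF has_derivative_const] by fastforce
  with Suc.IH show ?case
    by (simp add: differentiable_up_to_Suc)
qed simp

lemma differentiable_up_to_add:
  assumes "open S"
  shows "differentiable_up_to k S f \<Longrightarrow> differentiable_up_to k S g \<Longrightarrow>
    differentiable_up_to k S (\<lambda>x. f x + g x)"
proof (induction k arbitrary: f g)
  case (Suc k)
  have "differentiable_up_to k S (partial_deriv (\<lambda>x. f x + g x) i)" if "i \<in> Basis" for i
  proof (rule differentiable_up_to_cong[OF assms])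
    show "differentiable_up_to k S (\<lambda>x. partial_deriv f i x + partial_deriv g i x)"
      using Suc that by (simp add: differentiable_up_to_Suc)
    show "partial_deriv f i x + partial_deriv g i x = partial_deriv (\<lambda>x. f x + g x) i x"
      if "x \<in> S" for x
      using partial_deriv_add differentiable_up_to_imp_differentiable_at Suc.prems assms that
      by metis
  qed
  then show ?case
    using Suc.prems by (simp add: differentiable_up_to_Suc differentiable_on_add)
qed simp

lemma differentiable_up_to_mult:
  assumes "open S"
  shows "differentiable_up_to k S f \<Longrightarrow> differentiable_up_to k S g \<Longrightarrow>
    differentiable_up_to k S (\<lambda>x. f x * g x)"
proof (induction k arbitrary: f g)
  case (Suc k)
  have f: "differentiable_up_to k S f" and g: "differentiable_up_to k S g"
    using Suc.prems differentiable_up_to_mono le_SucI by blast+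
  have "differentiable_up_to k S (partial_deriv (\<lambda>x. f x * g x) i)" if "i \<in> Basis" for i
  proof (rule differentiable_up_to_cong[OF assms])
    show "differentiable_up_to k S (\<lambda>x. partial_deriv f i x * g x + f x * partial_deriv g i x)"
      using Suc that f g by (simp add: differentiable_up_to_Suc differentiable_up_to_add[OF assms])
    show "partial_deriv f i x * g x + f x * partial_deriv g i x = partial_deriv (\<lambda>x. f x * g x) i x"
      if "x \<in> S" for x
      using partial_deriv_mult differentiable_up_to_imp_differentiable_at Suc.prems assms that
      by metis
  qed
  then show ?case
    using Suc.prems by (simp add: differentiable_up_to_Suc differentiable_on_mult)
qed simp

lemma differentiable_up_to_sum:
  assumes "open S" "\<And>a. a \<in> A \<Longrightarrow> differentiable_up_to k S (f a)"
  shows "differentiable_up_to k S (\<lambda>x. \<Sum>a\<in>A. f a x)"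
  using assms(2)
  by (induction A rule: infinite_finite_induct)
    (simp_all add: differentiable_up_to_const differentiable_up_to_add[OF assms(1)])

lemma differentiable_up_to_bounded_linear:
  fixes l :: "'a::euclidean_space \<Rightarrow> real"
  assumes "bounded_linear l"
  shows "differentiable_up_to k S l"
proof (cases k)
  case (Suc j)
  have "partial_deriv l i = (\<lambda>x. l i)" for i :: 'a
    using partial_deriv_at[OF bounded_linear_imp_has_derivative[OF assms]] by fastforce
  then show ?thesis
    using Suc assms
    by (simp add: differentiable_up_to_Suc differentiable_up_to_const
          bounded_linear_imp_differentiable_on)
qed simp

lemma differentiable_up_to_compose:
  fixes g :: "'b::euclidean_space \<Rightarrow> real" and G :: "'a::euclidean_space \<Rightarrow> 'b"
  assumes "open S" "open W" "G ` S \<subseteq> W"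
  shows "differentiable_up_to k W g \<Longrightarrow> (\<And>j. j \<in> Basis \<Longrightarrow> differentiable_up_to k S (\<lambda>x. G x \<bullet> j)) \<Longrightarrow>
    differentiable_up_to k S (\<lambda>x. g (G x))"
proof (induction k arbitrary: g)
  case (Suc k)
  have G: "G differentiable at x" if "x \<in> S" for x
  proof -
    have "(\<lambda>x. G x \<bullet> j) differentiable at x" if "j \<in> Basis" for j
      using differentiable_up_to_imp_differentiable_at[OF Suc.prems(2)[OF that] assms(1) \<open>x \<in> S\<close>] .
    then show ?thesis
      using differentiable_componentwise_within[of G x UNIV] by blast
  qed
  have g: "g differentiable at (G x)" if "x \<in> S" for x
    using differentiable_up_to_imp_differentiable_at[OF Suc.prems(1) assms(2)] assms(3) that by blast
  have "differentiable_up_to k S (partial_deriv (\<lambda>x. g (G x)) i)" if "i \<in> Basis" for i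
  proof (rule differentiable_up_to_cong[OF assms(1)])
    have "differentiable_up_to k S (\<lambda>x. partial_deriv g j (G x) * partial_deriv (\<lambda>x. G x \<bullet> j) i x)"
      if "j \<in> Basis" for j
    proof (rule differentiable_up_to_mult[OF assms(1)])
      show "differentiable_up_to k S (\<lambda>x. partial_deriv g j (G x))"
      proof (rule Suc.IH)
        show "differentiable_up_to k W (partial_deriv g j)"
          using Suc.prems(1) that by (simp add: differentiable_up_to_Suc)
        show "differentiable_up_to k S (\<lambda>x. G x \<bullet> l)" if "l \<in> Basis" for l
          using differentiable_up_to_mono[OF Suc.prems(2)[OF that], of k] by simp
      qed
      show "differentiable_up_to k S (partial_deriv (\<lambda>x. G x \<bullet> j) i)"
        using Suc.prems(2)[OF that] \<open>i \<in> Basis\<close> by (simp add: differentiable_up_to_Suc)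
    qed
    then show "differentiable_up_to k S
        (\<lambda>x. \<Sum>j\<in>Basis. partial_deriv g j (G x) * partial_deriv (\<lambda>x. G x \<bullet> j) i x)"
      by (rule differentiable_up_to_sum[OF assms(1)])
    show "(\<Sum>j\<in>Basis. partial_deriv g j (G x) * partial_deriv (\<lambda>x. G x \<bullet> j) i x) =
        partial_deriv (\<lambda>x. g (G x)) i x" if "x \<in> S" for x
      using partial_deriv_compose[OF G g] that by simp
  qed
  moreover have "(\<lambda>x. g (G x)) differentiable_on S"
    using differentiable_chain_at[OF G g] assms(1)
    by (simp add: differentiable_on_eq_differentiable_at o_def)
  ultimately show ?case
    by (simp add: differentiable_up_to_Suc)
qed simp

lemma differentiable_up_to_real_inverse: "differentiable_up_to k (- {0}) (\<lambda>t::real. inverse t)"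
proof (induction k)
  case (Suc k)
  have "differentiable_up_to k (- {0}) (partial_deriv (\<lambda>t::real. inverse t) 1)"
  proof (rule differentiable_up_to_cong)
    show "differentiable_up_to k (- {0}) (\<lambda>t::real. - 1 * (inverse t * inverse t))"
      using Suc by (intro differentiable_up_to_mult differentiable_up_to_const) auto
    show "- 1 * (inverse t * inverse t) = partial_deriv inverse 1 t" if "t \<in> - {0}" for t :: real
      using partial_deriv_at[OF has_derivative_inverse'] that by simp
  qed auto
  moreover have "(\<lambda>t::real. inverse t) differentiable_on - {0}"
    using has_derivative_inverse' unfolding differentiable_on_def differentiable_def by fastforce
  ultimately show ?case
    by (simp add: differentiable_up_to_Suc)
qed simp

lemma differentiable_up_to_inverse:
  assumes "open S" "differentiable_up_to k S g" "\<And>x. x \<in> S \<Longrightarrow> g x \<noteq> 0"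
  shows "differentiable_up_to k S (\<lambda>x. inverse (g x))"
  using assms
  by (intro differentiable_up_to_compose[OF _ _ _ differentiable_up_to_real_inverse]) auto

lemma differentiable_up_to_power:
  assumes "open S" "differentiable_up_to k S g"
  shows "differentiable_up_to k S (\<lambda>x. g x ^ n)"
  by (induction n) (simp_all add: differentiable_up_to_const differentiable_up_to_mult assms)

lemma smooth_on_partial_deriv: "smooth_on S g \<Longrightarrow> v \<in> Basis \<Longrightarrow> smooth_on S (partial_deriv g v)"
  by (metis differentiable_up_to_Suc smooth_on_iff_differentiable_up_to)

lemma smooth_on_imp_differentiable_at: "smooth_on S g \<Longrightarrow> open S \<Longrightarrow> x \<in> S \<Longrightarrow> g differentiable at x"
  by (meson differentiable_up_to_imp_differentiable_at smooth_on_iff_differentiable_up_to)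

lemma smooth_on_imp_continuous_on: "smooth_on S g \<Longrightarrow> continuous_on S g"
  by (meson differentiable_imp_continuous_on differentiable_up_to_Suc
      smooth_on_iff_differentiable_up_to)

lemma continuous_on_gradient_fst:
  fixes \<Phi> :: "'a::euclidean_space \<times> 'b::euclidean_space \<Rightarrow> real"
  assumes "open U" "smooth_on (U \<times> UNIV) \<Phi>"
  shows "continuous_on (U \<times> UNIV) (\<lambda>(x, y). gradient (\<lambda>x. \<Phi> (x, y)) x)"
proof -
  have "continuous_on (U \<times> UNIV) (partial_deriv \<Phi> (i, 0))" if "i \<in> Basis" for i
    using smooth_on_imp_continuous_on[OF smooth_on_partial_deriv[OF assms(2), of "(i, 0)"]] that
    by (simp add: Basis_prod_def)
  then have cont: "continuous_on (U \<times> UNIV) (\<lambda>p. \<Sum>i\<in>Basis. partial_deriv \<Phi> (i, 0) p *\<^sub>R i)"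
    by (intro continuous_intros)
  have diff: "\<Phi> differentiable at p" if "p \<in> U \<times> UNIV" for p
    using smooth_on_imp_differentiable_at[OF assms(2) _ that] assms(1) by (simp add: open_Times)
  show ?thesis
    by (rule continuous_on_eq[OF cont]) (auto simp: gradient_fst diff)
qed

section \<open>Differentiation under the integral sign\<close>

lemma set_integrable_sum:
  "(\<And>i. i \<in> I \<Longrightarrow> set_integrable M A (f i)) \<Longrightarrow> set_integrable M A (\<lambda>x. \<Sum>i\<in>I. f i x)"
  by (simp add: set_integrable_def scaleR_sum_right)

lemma set_integral_sum:
  "(\<And>i. i \<in> I \<Longrightarrow> set_integrable M A (f i)) \<Longrightarrow>
    (LINT x:A|M. (\<Sum>i\<in>I. f i x)) = (\<Sum>i\<in>I. LINT x:A|M. f i x)"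
  by (simp add: set_integrable_def set_lebesgue_integral_def scaleR_sum_right integral_sum)

lemma set_integral_inner_left:
  fixes f :: "'a \<Rightarrow> 'b::euclidean_space"
  assumes "set_integrable M A f"
  shows "(LINT x:A|M. f x) \<bullet> c = (LINT x:A|M. f x \<bullet> c)"
  using assms integral_inner_left[of c M "\<lambda>x. indicator A x *\<^sub>R f x"]
  by (simp add: set_integrable_def set_lebesgue_integral_def)

lemma set_integral_inner_eq_sum_Basis:
  fixes v w :: "'a \<Rightarrow> 'b::euclidean_space"
  assumes "\<And>j. j \<in> Basis \<Longrightarrow> set_integrable M A (\<lambda>y. g y * (v y \<bullet> j) * (w y \<bullet> j))"
  shows "(LINT y:A|M. g y * (v y \<bullet> w y)) = (\<Sum>j\<in>Basis. LINT y:A|M. g y * (v y \<bullet> j) * (w y \<bullet> j))"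
proof -
  have "g y * (v y \<bullet> w y) = (\<Sum>j\<in>Basis. g y * (v y \<bullet> j) * (w y \<bullet> j))" for y
  proof -
    have "v y \<bullet> w y = (\<Sum>j\<in>Basis. (v y \<bullet> j) * (w y \<bullet> j))"
      by (rule euclidean_inner)
    then show ?thesis
      by (simp add: sum_distrib_left mult.assoc)
  qed
  then show ?thesis
    using set_integral_sum[OF assms] by simp
qed

lemma
  assumes "B \<subseteq> A" "\<And>x. x \<in> A \<Longrightarrow> x \<notin> B \<Longrightarrow> f x = 0"
  shows set_integrable_support_subset: "set_integrable M A f \<longleftrightarrow> set_integrable M B f"
    and set_integral_support_subset: "(LINT x:A|M. f x) = (LINT x:B|M. f x)"
proof -
  have "(\<lambda>x. indicator A x *\<^sub>R f x) = (\<lambda>x. indicator B x *\<^sub>R f x)"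
    using assms by (auto simp: fun_eq_iff indicator_def)
  then show "set_integrable M A f \<longleftrightarrow> set_integrable M B f" "(LINT x:A|M. f x) = (LINT x:B|M. f x)"
    by (simp_all add: set_integrable_def set_lebesgue_integral_def)
qed

lemma set_integrable_scaleR_bounded:
  fixes f :: "'a \<Rightarrow> real" and g :: "'a \<Rightarrow> 'b::{banach, second_countable_topology}"
  assumes f: "set_integrable M A f" and g: "g \<in> borel_measurable M"
    and bound: "\<And>x. x \<in> A \<Longrightarrow> norm (g x) \<le> c"
  shows "set_integrable M A (\<lambda>x. f x *\<^sub>R g x)"
proof (rule set_integrable_bound[OF set_integrable_mult_right[OF f, of c]])
  have "(\<lambda>x. indicator A x *\<^sub>R f x) \<in> borel_measurable M"
    using f by (simp add: set_integrable_def)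
  then show "set_borel_measurable M A (\<lambda>x. f x *\<^sub>R g x)"
    using g by (simp add: set_borel_measurable_def)
  show "AE x in M. x \<in> A \<longrightarrow> norm (f x *\<^sub>R g x) \<le> norm (c * f x)"
  proof (intro AE_I2 impI)
    fix x assume "x \<in> A"
    then have "\<bar>f x\<bar> * norm (g x) \<le> \<bar>f x\<bar> * \<bar>c\<bar>"
      using bound[of x] by (intro mult_left_mono) auto
    then show "norm (f x *\<^sub>R g x) \<le> norm (c * f x)"
      by (simp add: abs_mult mult.commute)
  qed
qed

lemma set_integrable_scaleR_continuous:
  fixes g :: "'a::euclidean_space \<Rightarrow> 'b::euclidean_space"
  assumes "set_integrable lebesgue B f" "compact B" "continuous_on UNIV g"
  shows "set_integrable lebesgue B (\<lambda>x. f x *\<^sub>R g x)"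
proof -
  obtain c where "\<And>x. x \<in> B \<Longrightarrow> norm (g x) \<le> c"
    using compact_imp_bounded[OF compact_continuous_image[OF continuous_on_subset[OF assms(3)]
      assms(2)]]
    by (auto simp: bounded_iff)
  moreover have "g \<in> borel_measurable lebesgue"
    using borel_measurable_continuous_onI[OF assms(3)] by (simp add: measurable_completion)
  ultimately show ?thesis
    using set_integrable_scaleR_bounded[OF assms(1)] by blast
qed

lemma set_integral_mult_bound:
  fixes f g :: "'a \<Rightarrow> real"
  assumes "set_integrable M B f" "set_integrable M B (\<lambda>y. f y * g y)" "\<And>y. y \<in> B \<Longrightarrow> \<bar>g y\<bar> \<le> c"
  shows "\<bar>LINT y:B|M. f y * g y\<bar> \<le> c * (LINT y:B|M. \<bar>f y\<bar>)"
proof -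
  have "\<bar>LINT y:B|M. f y * g y\<bar> \<le> (LINT y:B|M. norm (f y * g y))"
    using set_integral_norm_bound[OF assms(2)] by simp
  also have "\<dots> \<le> (LINT y:B|M. c * \<bar>f y\<bar>)"
  proof (rule set_integral_mono)
    show "norm (f y * g y) \<le> c * \<bar>f y\<bar>" if "y \<in> B" for y
      using mult_left_mono[OF assms(3)[OF that] abs_ge_zero[of "f y"]]
        by (simp add: abs_mult mult.commute)
  qed (use assms(1,2) in \<open>auto simp: set_integrable_abs set_integrable_norm\<close>)
  finally show ?thesis
    by simp
qed

lemma continuous_on_Times_slice:
  assumes "continuous_on (U \<times> UNIV) (\<lambda>(x, y). P x y)" "x \<in> U"
  shows "continuous_on UNIV (P x)"
  using continuous_on_compose2[OF assms(1) continuous_on_Pair[OF continuous_on_const continuous_on_id]]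
    assms(2)
  by fastforce

lemma uniformly_continuous_in_parameter:
  fixes P :: "'a::heine_borel \<Rightarrow> 'b::metric_space \<Rightarrow> 'c::metric_space"
  assumes "open U" "x0 \<in> U" "compact B" "continuous_on (U \<times> B) (\<lambda>(x, y). P x y)" "e > 0"
  obtains d where "d > 0" "ball x0 d \<subseteq> U"
    "\<And>x y. x \<in> ball x0 d \<Longrightarrow> y \<in> B \<Longrightarrow> dist (P x y) (P x0 y) < e"
proof -
  obtain r where r: "r > 0" "cball x0 r \<subseteq> U"
    using assms(1,2) open_contains_cball by blast
  have "uniformly_continuous_on (cball x0 r \<times> B) (\<lambda>(x, y). P x y)"
    using r assms(3,4)
    by (intro compact_uniformly_continuous compact_Times compact_cball)
      (auto elim: continuous_on_subset)
  then obtain d where d: "d > 0"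
    and dP: "\<And>p p'. p \<in> cball x0 r \<times> B \<Longrightarrow> p' \<in> cball x0 r \<times> B \<Longrightarrow> dist p' p < d \<Longrightarrow>
      dist ((\<lambda>(x, y). P x y) p') ((\<lambda>(x, y). P x y) p) < e"
    using assms(5) unfolding uniformly_continuous_on_def by metis
  show thesis
  proof
    show "min d r > 0" "ball x0 (min d r) \<subseteq> U"
      using d r by auto
    show "dist (P x y) (P x0 y) < e" if "x \<in> ball x0 (min d r)" "y \<in> B" for x y
      using dP[of "(x0, y)" "(x, y)"] that r by (auto simp: dist_Pair_Pair dist_commute)
  qed
qed

lemma linearization_bound_gradient:
  fixes K :: "'a::euclidean_space \<Rightarrow> real"
  assumes "convex S" "x0 \<in> S" "x \<in> S"
    and K: "\<And>t. t \<in> S \<Longrightarrow> (K has_derivative (\<lambda>h. G t \<bullet> h)) (at t within S)"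
    and G: "\<And>t. t \<in> S \<Longrightarrow> norm (G t - G x0) \<le> e"
  shows "\<bar>K x - K x0 - G x0 \<bullet> (x - x0)\<bar> \<le> e * norm (x - x0)"
proof -
  have "x0 + t *\<^sub>R (x - x0) \<in> S" if "t \<in> {0..1}" for t
    using convexD_alt[OF assms(1-3), of t] that by (simp add: algebra_simps)
  moreover have "onorm (\<lambda>h. G t \<bullet> h - G x0 \<bullet> h) \<le> e" if "t \<in> S" for t
  proof (rule onorm_le)
    fix h
    have "\<bar>(G t - G x0) \<bullet> h\<bar> \<le> e * norm h"
      using Cauchy_Schwarz_ineq2[of "G t - G x0" h] G[OF that]
      by (meson mult_right_mono norm_ge_zero order_trans)
    then show "norm (G t \<bullet> h - G x0 \<bullet> h) \<le> e * norm h"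
      by (simp add: inner_diff_left)
  qed
  ultimately show ?thesis
    using differentiable_bound_linearization[where a=x0 and b=x and S=S and f=K and f'="\<lambda>t h. G t \<bullet> h" and B=e]
      K assms(2)
    by (simp add: fun_diff_def mult.commute)
qed

lemma uniform_linearization_in_parameter:
  fixes K :: "'a::euclidean_space \<Rightarrow> 'b::metric_space \<Rightarrow> real" and G :: "'a \<Rightarrow> 'b \<Rightarrow> 'a"
  assumes "open U" "x0 \<in> U" "compact B"
    and K: "\<And>x y. x \<in> U \<Longrightarrow> ((\<lambda>x. K x y) has_derivative (\<lambda>h. G x y \<bullet> h)) (at x)"
    and G: "continuous_on (U \<times> B) (\<lambda>(x, y). G x y)" and "e > 0"
  obtains d where "d > 0" "ball x0 d \<subseteq> U"
    "\<And>x y. x \<in> ball x0 d \<Longrightarrow> y \<in> B \<Longrightarrow> \<bar>K x y - K x0 y - G x0 y \<bullet> (x - x0)\<bar> \<le> e * norm (x - x0)"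
proof -
  obtain d where d: "d > 0" "ball x0 d \<subseteq> U"
    and close: "\<And>t y. t \<in> ball x0 d \<Longrightarrow> y \<in> B \<Longrightarrow> dist (G t y) (G x0 y) < e"
    using uniformly_continuous_in_parameter[OF assms(1-3) G \<open>e > 0\<close>] by blast
  show thesis
  proof (rule that[OF d])
    fix x y assume x: "x \<in> ball x0 d" and "y \<in> B"
    show "\<bar>K x y - K x0 y - G x0 y \<bullet> (x - x0)\<bar> \<le> e * norm (x - x0)"
    proof (rule linearization_bound_gradient[of "ball x0 d"])
      show "((\<lambda>x. K x y) has_derivative (\<lambda>h. G t y \<bullet> h)) (at t within ball x0 d)"
        if "t \<in> ball x0 d" for t
        using K[of t y] that d(2) by (blast intro: has_derivative_at_withinI)
      show "norm (G t y - G x0 y) \<le> e" if "t \<in> ball x0 d" for t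
        using close[OF that \<open>y \<in> B\<close>] by (simp add: dist_norm)
    qed (use x d in auto)
  qed
qed

lemma set_integral_linearization_error:
  fixes K :: "'a::euclidean_space \<Rightarrow> 'b::euclidean_space \<Rightarrow> real" and G :: "'a \<Rightarrow> 'b \<Rightarrow> 'a"
  assumes U: "open U" "x0 \<in> U" and B: "compact B" and f: "set_integrable lebesgue B f"
    and K: "\<And>x y. x \<in> U \<Longrightarrow> ((\<lambda>x. K x y) has_derivative (\<lambda>h. G x y \<bullet> h)) (at x)"
    and K_cont: "\<And>x. x \<in> U \<Longrightarrow> continuous_on UNIV (K x)"
    and G_cont: "continuous_on (U \<times> UNIV) (\<lambda>(x, y). G x y)" and "e > 0"
  obtains d where "d > 0" "\<And>x. norm (x - x0) < d \<Longrightarrow>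
    \<bar>LINT y:B|lebesgue. f y * (K x y - K x0 y - G x0 y \<bullet> (x - x0))\<bar> \<le> e * norm (x - x0)"
proof -
  define I where "I = (LINT y:B|lebesgue. \<bar>f y\<bar>)"
  have "I \<ge> 0"
    unfolding I_def set_lebesgue_integral_def by (simp add: indicator_def)
  define e' where "e' = e / (I + 1)"
  have "e' > 0" "e' * I \<le> e"
    using \<open>e > 0\<close> \<open>I \<ge> 0\<close> by (simp_all add: e'_def field_simps)
  obtain d where d: "d > 0" "ball x0 d \<subseteq> U"
    and pointwise: "\<And>x y. x \<in> ball x0 d \<Longrightarrow> y \<in> B \<Longrightarrow>
      \<bar>K x y - K x0 y - G x0 y \<bullet> (x - x0)\<bar> \<le> e' * norm (x - x0)"
    using uniform_linearization_in_parameter[OF U B K continuous_on_subset[OF G_cont] \<open>e' > 0\<close>]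
    by blast
  show thesis
  proof (rule that[OF \<open>d > 0\<close>])
    fix x assume "norm (x - x0) < d"
    then have x: "x \<in> ball x0 d"
      by (simp add: dist_norm norm_minus_commute)
    then have "continuous_on UNIV (\<lambda>y. K x y - K x0 y - G x0 y \<bullet> (x - x0))"
      using K_cont U(2) d(2) continuous_on_Times_slice[OF G_cont U(2)]
      by (intro continuous_on_diff continuous_on_inner continuous_on_const) auto
    from set_integrable_scaleR_continuous[OF f B this]
    have "\<bar>LINT y:B|lebesgue. f y * (K x y - K x0 y - G x0 y \<bullet> (x - x0))\<bar> \<le> e' * norm (x - x0) * I"
      unfolding I_def by (intro set_integral_mult_bound f pointwise[OF x]) auto
    also have "\<dots> \<le> e * norm (x - x0)"
      using mult_right_mono[OF \<open>e' * I \<le> e\<close> norm_ge_zero[of "x - x0"]] by (simp add: ac_simps)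
    finally show "\<bar>LINT y:B|lebesgue. f y * (K x y - K x0 y - G x0 y \<bullet> (x - x0))\<bar> \<le> e * norm (x - x0)" .
  qed
qed

lemma has_derivative_set_integral_parametric:
  fixes K :: "'a::euclidean_space \<Rightarrow> 'b::euclidean_space \<Rightarrow> real" and G :: "'a \<Rightarrow> 'b \<Rightarrow> 'a"
  assumes U: "open U" "x0 \<in> U" and B: "compact B" and f: "set_integrable lebesgue B f"
    and K: "\<And>x y. x \<in> U \<Longrightarrow> ((\<lambda>x. K x y) has_derivative (\<lambda>h. G x y \<bullet> h)) (at x)"
    and K_cont: "\<And>x. x \<in> U \<Longrightarrow> continuous_on UNIV (K x)"
    and G_cont: "continuous_on (U \<times> UNIV) (\<lambda>(x, y). G x y)"
  shows "((\<lambda>x. LINT y:B|lebesgue. K x y * f y) has_derivative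
    (\<lambda>h. (LINT y:B|lebesgue. f y *\<^sub>R G x0 y) \<bullet> h)) (at x0)"
  unfolding has_derivative_at_alt
proof (intro conjI allI impI bounded_linear_inner_right)
  fix e :: real assume "e > 0"
  then obtain d where "d > 0" and small: "\<And>x. norm (x - x0) < d \<Longrightarrow>
      \<bar>LINT y:B|lebesgue. f y * (K x y - K x0 y - G x0 y \<bullet> (x - x0))\<bar> \<le> e * norm (x - x0)"
    using set_integral_linearization_error[OF assms] by blast
  have G_x0: "continuous_on UNIV (G x0)"
    by (rule continuous_on_Times_slice[OF G_cont U(2)])
  have int_K: "set_integrable lebesgue B (\<lambda>y. f y * K z y)" if "z \<in> U" for z
    using set_integrable_scaleR_continuous[OF f B K_cont[OF that]] by simp
  have int_lin: "set_integrable lebesgue B (\<lambda>y. f y * (G x0 y \<bullet> h))" for h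
    using set_integrable_scaleR_continuous[OF f B continuous_on_inner[OF G_x0 continuous_on_const]]
    by simp
  have "(LINT y:B|lebesgue. K x y * f y) - (LINT y:B|lebesgue. K x0 y * f y)
      - (LINT y:B|lebesgue. f y *\<^sub>R G x0 y) \<bullet> (x - x0)
      = (LINT y:B|lebesgue. f y * (K x y - K x0 y - G x0 y \<bullet> (x - x0)))" if "x \<in> U" for x
    using set_integral_diff(2)[OF set_integral_diff(1)[OF int_K int_K] int_lin] that U(2)
      set_integrable_scaleR_continuous[OF f B G_x0]
    by (simp add: set_integral_diff(2)[OF int_K int_K] set_integral_inner_left right_diff_distrib
        mult.commute)
  moreover obtain r where "r > 0" "ball x0 r \<subseteq> U"
    using U openE by blast
  ultimately show "\<exists>d>0. \<forall>x. norm (x - x0) < d \<longrightarrow>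
      norm ((LINT y:B|lebesgue. K x y * f y) - (LINT y:B|lebesgue. K x0 y * f y)
        - (LINT y:B|lebesgue. f y *\<^sub>R G x0 y) \<bullet> (x - x0)) \<le> e * norm (x - x0)"
    using \<open>d > 0\<close> small by (intro exI[of _ "min d r"]) (auto simp: dist_norm norm_minus_commute subset_iff)
qed

section \<open>Integral operators with smooth kernels\<close>

definition locally_integrable_on :: "('a::euclidean_space \<Rightarrow> real) \<Rightarrow> 'a set \<Rightarrow> bool" where
  "locally_integrable_on f \<Omega> \<longleftrightarrow> (\<forall>K. compact K \<and> K \<subseteq> \<Omega> \<longrightarrow> set_integrable lebesgue K f)"

definition kernel_integral ::
  "'a::euclidean_space set \<Rightarrow> ('a \<Rightarrow> real) \<Rightarrow> ('a \<times> 'a \<Rightarrow> real) \<Rightarrow> 'a \<Rightarrow> real" where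
  "kernel_integral \<Omega> f \<Phi> x = (LINT y:\<Omega>|lebesgue. \<Phi> (x, y) * f y)"

definition smooth_kernel :: "'a::euclidean_space set \<Rightarrow> 'a set \<Rightarrow> ('a \<times> 'a \<Rightarrow> real) \<Rightarrow> bool" where
  "smooth_kernel \<Omega> U \<Phi> \<longleftrightarrow> smooth_on (U \<times> UNIV) \<Phi> \<and>
     (\<forall>x0\<in>U. \<exists>B. compact B \<and> B \<subseteq> \<Omega> \<and> (\<forall>\<^sub>F x in nhds x0. \<forall>y. y \<notin> B \<longrightarrow> \<Phi> (x, y) = 0))"

lemma smooth_kernel_support:
  assumes "open U" "smooth_kernel \<Omega> U \<Phi>" "x0 \<in> U"
  obtains V B where "open V" "x0 \<in> V" "V \<subseteq> U" "compact B" "B \<subseteq> \<Omega>"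
    "\<And>x y. x \<in> V \<Longrightarrow> y \<notin> B \<Longrightarrow> \<Phi> (x, y) = 0"
    "\<And>x y i. x \<in> V \<Longrightarrow> y \<notin> B \<Longrightarrow> partial_deriv \<Phi> (i, 0) (x, y) = 0"
proof -
  obtain B V where B: "compact B" "B \<subseteq> \<Omega>" and V: "open V" "x0 \<in> V"
    and zero: "\<And>x y. x \<in> V \<Longrightarrow> y \<notin> B \<Longrightarrow> \<Phi> (x, y) = 0"
    using assms unfolding smooth_kernel_def eventually_nhds by metis
  have smooth: "smooth_on (U \<times> UNIV) \<Phi>"
    using assms(2) by (simp add: smooth_kernel_def)
  show thesis
  proof (rule that[of "V \<inter> U" B])
    show "partial_deriv \<Phi> (i, 0) (x, y) = 0" if "x \<in> V \<inter> U" "y \<notin> B" for x y i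
    proof -
      have "\<Phi> differentiable at (x, y)"
        using smooth_on_imp_differentiable_at[OF smooth] assms(1) that(1) by (auto simp: open_Times)
      then show ?thesis
        using partial_deriv_eq_0_open[of "V \<inter> U" x "\<lambda>x. \<Phi> (x, y)"] partial_deriv_fst
          V assms(1) that zero
        by (metis IntD1 open_Int)
    qed
  qed (use B V zero assms in auto)
qed

lemma smooth_kernel_partial_deriv:
  assumes "open U" "smooth_kernel \<Omega> U \<Phi>" "i \<in> Basis"
  shows "smooth_kernel \<Omega> U (partial_deriv \<Phi> (i, 0))"
  unfolding smooth_kernel_def
proof (intro conjI ballI)
  show "smooth_on (U \<times> UNIV) (partial_deriv \<Phi> (i, 0))"
    using assms(2,3) by (intro smooth_on_partial_deriv) (auto simp: smooth_kernel_def Basis_prod_def)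
  fix x0 assume "x0 \<in> U"
  then obtain V B where "open V" "x0 \<in> V" "compact B" "B \<subseteq> \<Omega>"
    "\<And>x y. x \<in> V \<Longrightarrow> y \<notin> B \<Longrightarrow> partial_deriv \<Phi> (i, 0) (x, y) = 0"
    using smooth_kernel_support[OF assms(1,2)] by metis
  then show "\<exists>B. compact B \<and> B \<subseteq> \<Omega> \<and> (\<forall>\<^sub>F x in nhds x0. \<forall>y. y \<notin> B \<longrightarrow> partial_deriv \<Phi> (i, 0) (x, y) = 0)"
    unfolding eventually_nhds by blast
qed

lemma has_derivative_kernel_integral:
  assumes "open U" "smooth_kernel \<Omega> U \<Phi>" "locally_integrable_on f \<Omega>" "x0 \<in> U"
  shows "(kernel_integral \<Omega> f \<Phi> has_derivative
    (\<lambda>h. LINT y:\<Omega>|lebesgue. (gradient (\<lambda>x. \<Phi> (x, y)) x0 \<bullet> h) * f y)) (at x0)"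
proof -
  obtain V B where V: "open V" "x0 \<in> V" "V \<subseteq> U" and B: "compact B" "B \<subseteq> \<Omega>"
    and zero: "\<And>x y. x \<in> V \<Longrightarrow> y \<notin> B \<Longrightarrow> \<Phi> (x, y) = 0"
    and zero': "\<And>x y i. x \<in> V \<Longrightarrow> y \<notin> B \<Longrightarrow> partial_deriv \<Phi> (i, 0) (x, y) = 0"
    using smooth_kernel_support[OF assms(1,2,4)] by metis
  have smooth: "smooth_on (U \<times> UNIV) \<Phi>"
    using assms(2) by (simp add: smooth_kernel_def)
  have diff: "\<Phi> differentiable at (x, y)" if "x \<in> V" for x y
    using smooth_on_imp_differentiable_at[OF smooth] assms(1) that V(3) by (auto simp: open_Times)
  define G where "G x y = gradient (\<lambda>x. \<Phi> (x, y)) x" for x y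
  have G_cont: "continuous_on (V \<times> UNIV) (\<lambda>(x, y). G x y)"
    using continuous_on_gradient_fst[OF assms(1) smooth] V(3) unfolding G_def
    by (auto elim!: continuous_on_subset)
  have \<Phi>_cont: "continuous_on (V \<times> UNIV) (\<lambda>(x, y). \<Phi> (x, y))"
    using smooth_on_imp_continuous_on[OF smooth] V(3) by (auto elim: continuous_on_subset)
  have f: "set_integrable lebesgue B f"
    using assms(3) B by (simp add: locally_integrable_on_def)
  have deriv_B: "((\<lambda>x. LINT y:B|lebesgue. \<Phi> (x, y) * f y) has_derivative
      (\<lambda>h. (LINT y:B|lebesgue. f y *\<^sub>R G x0 y) \<bullet> h)) (at x0)"
    using has_derivative_gradient[OF differentiable_at_fst[OF diff]] continuous_on_Times_slice[OF \<Phi>_cont]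
    unfolding G_def[symmetric] by (intro has_derivative_set_integral_parametric[OF V(1,2) B(1) f _ _ G_cont])
  have "(LINT y:B|lebesgue. f y *\<^sub>R G x0 y) \<bullet> h = (LINT y:\<Omega>|lebesgue. (G x0 y \<bullet> h) * f y)" for h
  proof -
    have "G x0 y = 0" if "y \<notin> B" for y
      using zero'[OF V(2) that] diff[OF V(2)] by (simp add: G_def gradient_fst)
    then show ?thesis
      using set_integrable_scaleR_continuous[OF f B(1) continuous_on_Times_slice[OF G_cont V(2)]] B(2)
      by (simp add: set_integral_inner_left set_integral_support_subset[of B \<Omega>] mult.commute)
  qed
  with deriv_B have "((\<lambda>x. LINT y:B|lebesgue. \<Phi> (x, y) * f y) has_derivative
      (\<lambda>h. LINT y:\<Omega>|lebesgue. (G x0 y \<bullet> h) * f y)) (at x0)"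
    by simp
  moreover have "(LINT y:B|lebesgue. \<Phi> (x, y) * f y) = kernel_integral \<Omega> f \<Phi> x" if "x \<in> V" for x
    unfolding kernel_integral_def using B(2) zero[OF that]
    by (intro set_integral_support_subset[symmetric]) auto
  ultimately show ?thesis
    unfolding G_def by (rule has_derivative_transform_within_open[OF _ V(1,2)])
qed

lemma
  assumes "open U" "smooth_kernel \<Omega> U \<Phi>" "locally_integrable_on f \<Omega>" "x0 \<in> U"
  shows differentiable_kernel_integral: "kernel_integral \<Omega> f \<Phi> differentiable at x0"
    and partial_deriv_kernel_integral: "i \<in> Basis \<Longrightarrow>
      partial_deriv (kernel_integral \<Omega> f \<Phi>) i x0 = kernel_integral \<Omega> f (partial_deriv \<Phi> (i, 0)) x0"
proof -
  note deriv = has_derivative_kernel_integral[OF assms]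
  then show "kernel_integral \<Omega> f \<Phi> differentiable at x0"
    unfolding differentiable_def by blast
  have "\<Phi> differentiable at (x0, y)" for y
    using assms(1,4) smooth_on_imp_differentiable_at[of "U \<times> UNIV" \<Phi>] assms(2)
    by (auto simp: smooth_kernel_def open_Times)
  moreover assume "i \<in> Basis"
  ultimately show "partial_deriv (kernel_integral \<Omega> f \<Phi>) i x0 = kernel_integral \<Omega> f (partial_deriv \<Phi> (i, 0)) x0"
    using partial_deriv_at[OF deriv]
    by (simp add: kernel_integral_def gradient_inner_Basis partial_deriv_fst)
qed

lemma differentiable_up_to_kernel_integral:
  assumes "open U" "locally_integrable_on f \<Omega>"
  shows "smooth_kernel \<Omega> U \<Phi> \<Longrightarrow> differentiable_up_to k U (kernel_integral \<Omega> f \<Phi>)"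
proof (induction k arbitrary: \<Phi>)
  case (Suc k)
  have "differentiable_up_to k U (partial_deriv (kernel_integral \<Omega> f \<Phi>) i)" if "i \<in> Basis" for i
    using partial_deriv_kernel_integral[OF assms(1) Suc.prems assms(2) _ that]
    by (intro differentiable_up_to_cong[OF assms(1) _
          Suc.IH[OF smooth_kernel_partial_deriv[OF assms(1) Suc.prems that]]])
      simp
  moreover have "kernel_integral \<Omega> f \<Phi> differentiable_on U"
    using differentiable_kernel_integral[OF assms(1) Suc.prems assms(2)] assms(1)
    by (simp add: differentiable_on_eq_differentiable_at)
  ultimately show ?case
    by (simp add: differentiable_up_to_Suc)
qed simp

section \<open>Test functions and the distributional derivative\<close>

lemma eq_0_outside_closure_support: "x \<notin> closure {y. \<phi> y \<noteq> 0} \<Longrightarrow> \<phi> x = 0"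
  using closure_subset by (metis (mono_tags) mem_Collect_eq subsetD)

lemma test_funI:
  assumes "smooth_on UNIV \<phi>" "compact K" "K \<subseteq> \<Omega>" "\<And>y. \<phi> y \<noteq> 0 \<Longrightarrow> y \<in> K"
  shows "test_fun \<Omega> \<phi>"
proof -
  have support: "{y. \<phi> y \<noteq> 0} \<subseteq> K"
    using assms(4) by blast
  have "closure {y. \<phi> y \<noteq> 0} \<subseteq> K"
    by (rule closure_minimal[OF support compact_imp_closed[OF assms(2)]])
  moreover have "bounded {y. \<phi> y \<noteq> 0}"
    by (rule bounded_subset[OF compact_imp_bounded[OF assms(2)] support])
  ultimately show ?thesis
    using assms(1,3) by (simp add: test_fun_def compact_closure)
qed

lemma test_fun_partial_deriv:
  assumes "test_fun \<Omega> \<phi>" "i \<in> Basis"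
  shows "test_fun \<Omega> (partial_deriv \<phi> i)"
proof (rule test_funI)
  let ?K = "closure {y. \<phi> y \<noteq> 0}"
  show "smooth_on UNIV (partial_deriv \<phi> i)"
    using assms by (simp add: test_fun_def smooth_on_partial_deriv)
  show "compact ?K" "?K \<subseteq> \<Omega>"
    using assms(1) by (simp_all add: test_fun_def)
  show "y \<in> ?K" if "partial_deriv \<phi> i y \<noteq> 0" for y
  proof (rule ccontr)
    assume "y \<notin> ?K"
    then have "partial_deriv \<phi> i y = 0"
      by (intro partial_deriv_eq_0_open[of "- ?K"]) (auto intro: eq_0_outside_closure_support)
    with that show False
      by simp
  qed
qed

lemma set_integrable_test_fun_mult:
  assumes "test_fun \<Omega> \<phi>" "locally_integrable_on f \<Omega>"
  shows "set_integrable lebesgue \<Omega> (\<lambda>y. f y * \<phi> y)"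
proof -
  let ?K = "closure {y. \<phi> y \<noteq> 0}"
  have K: "compact ?K" "?K \<subseteq> \<Omega>"
    using assms(1) by (simp_all add: test_fun_def)
  have "set_integrable lebesgue ?K (\<lambda>y. f y *\<^sub>R \<phi> y)"
    using assms K
    by (intro set_integrable_scaleR_continuous)
      (auto simp: locally_integrable_on_def test_fun_def smooth_on_imp_continuous_on)
  moreover have "f y * \<phi> y = 0" if "y \<notin> ?K" for y
    using eq_0_outside_closure_support[OF that] by simp
  ultimately show ?thesis
    using set_integrable_support_subset[OF K(2), of "\<lambda>y. f y * \<phi> y" lebesgue]
    by (simp only: real_scaleR_def) blast
qed

lemma set_integrable_test_fun_scaleR:
  fixes g :: "'a::euclidean_space \<Rightarrow> 'b::euclidean_space"
  assumes "test_fun \<Omega> \<phi>" "sets M = sets borel" "emeasure M (closure {x. \<phi> x \<noteq> 0}) < \<infinity>"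
    and "g \<in> borel_measurable borel" "\<And>x. x \<in> \<Omega> \<Longrightarrow> norm (g x) \<le> 1"
  shows "set_integrable M \<Omega> (\<lambda>x. \<phi> x *\<^sub>R g x)"
proof -
  let ?K = "closure {y. \<phi> y \<noteq> 0}"
  have K: "compact ?K" "?K \<subseteq> \<Omega>" and \<phi>: "continuous_on UNIV \<phi>"
    using assms(1) by (simp_all add: test_fun_def smooth_on_imp_continuous_on)
  have "set_integrable M ?K (\<lambda>_. 1 :: real)"
    using integrable_real_indicator[of ?K M] K(1) assms(2,3)
    by (simp add: set_integrable_def borel_compact)
  moreover obtain c where "\<And>x. x \<in> ?K \<Longrightarrow> norm (\<phi> x) \<le> c"
    using compact_imp_bounded[OF compact_continuous_image[OF continuous_on_subset[OF \<phi>] K(1)]]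
    by (auto simp: bounded_iff)
  moreover have "\<phi> \<in> borel_measurable M" "g \<in> borel_measurable M"
    using borel_measurable_continuous_onI[OF \<phi>] assms(4)
      measurable_cong_sets[OF assms(2) refl] by auto
  ultimately have "set_integrable M ?K (\<lambda>x. (1 *\<^sub>R \<phi> x) *\<^sub>R g x)"
    using K(2) assms(5) by (intro set_integrable_scaleR_bounded) auto
  moreover have "\<phi> x *\<^sub>R g x = 0" if "x \<notin> ?K" for x
    using eq_0_outside_closure_support[OF that] by simp
  ultimately show ?thesis
    using set_integrable_support_subset[OF K(2), of "\<lambda>x. \<phi> x *\<^sub>R g x" M]
      by (simp only: scaleR_one) blast
qed

lemma
  assumes "BV_loc_with_deriv \<Omega> f \<mu> \<sigma>"
  shows BV_loc_locally_integrable: "locally_integrable_on f \<Omega>"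
    and BV_loc_integration_by_parts: "test_fun \<Omega> \<phi> \<Longrightarrow> i \<in> Basis \<Longrightarrow>
      (LINT y:\<Omega>|lebesgue. f y * partial_deriv \<phi> i y) = - (LINT y:\<Omega>|\<mu>. \<phi> y * (\<sigma> y \<bullet> i))"
  using assms by (simp_all add: BV_loc_with_deriv_def locally_integrable_on_def partial_deriv_def)

lemma BV_loc_set_integrable_test_fun:
  assumes "BV_loc_with_deriv \<Omega> f \<mu> \<sigma>" "test_fun \<Omega> \<phi>"
  shows "set_integrable \<mu> \<Omega> (\<lambda>y. \<phi> y *\<^sub>R \<sigma> y)"
    and "j \<in> Basis \<Longrightarrow> set_integrable \<mu> \<Omega> (\<lambda>y. \<phi> y * (\<sigma> y \<bullet> j))"
proof -
  have \<mu>: "sets \<mu> = sets borel" "emeasure \<mu> (closure {y. \<phi> y \<noteq> 0}) < \<infinity>"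
    and \<sigma>: "\<sigma> \<in> borel_measurable borel" "\<And>y. y \<in> \<Omega> \<Longrightarrow> norm (\<sigma> y) = 1"
    using assms by (simp_all add: BV_loc_with_deriv_def test_fun_def)
  show "set_integrable \<mu> \<Omega> (\<lambda>y. \<phi> y *\<^sub>R \<sigma> y)"
    using \<sigma> by (intro set_integrable_test_fun_scaleR[OF assms(2) \<mu>]) auto
  assume "j \<in> Basis"
  then have "norm (\<sigma> y \<bullet> j) \<le> 1" if "y \<in> \<Omega>" for y
    using Basis_le_norm[of j "\<sigma> y"] \<sigma>(2)[OF that] by simp
  then show "set_integrable \<mu> \<Omega> (\<lambda>y. \<phi> y * (\<sigma> y \<bullet> j))"
    using set_integrable_test_fun_scaleR[OF assms(2) \<mu>, of "\<lambda>y. \<sigma> y \<bullet> j"] \<sigma>(1) by simp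
qed

section \<open>The kernel of the operator T\<close>

lemma cball_subset_of_infdist_frontier:
  fixes S :: "'a::euclidean_space set"
  assumes "x \<in> S" "r < infdist x (frontier S)"
  shows "cball x r \<subseteq> S"
proof
  fix y assume y: "y \<in> cball x r"
  show "y \<in> S"
  proof (rule ccontr)
    assume "y \<notin> S"
    then obtain p where p: "p \<in> closed_segment x y" "p \<in> frontier S"
      using connected_Int_frontier[OF connected_segment, of x y S] assms(1) by auto
    have "infdist x (frontier S) \<le> dist x p"
      using infdist_le[OF p(2)] .
    also have "\<dots> \<le> dist x y"
      using dist_in_closed_segment[OF p(1)] by (simp add: dist_commute)
    finally show False
      using y assms(2) by simp
  qed
qed

lemma
  fixes \<Omega> :: "'a::euclidean_space set"
  assumes "open \<Omega>" "reg_dist \<Omega> \<eta>" "x \<in> \<Omega>"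
  shows reg_dist_pos: "0 < \<eta> x" and reg_dist_less_infdist: "\<eta> x < infdist x (frontier \<Omega>)"
proof -
  have "x \<notin> frontier \<Omega>"
    using assms(1,3) by (simp add: frontier_def interior_open)
  then show "0 < \<eta> x" "\<eta> x < infdist x (frontier \<Omega>)"
    using assms(2) unfolding reg_dist_def by (metis less_eq_real_def mem_Collect_eq)+
qed

lemma mollifier_scaled_eq_0:
  assumes "mollifier \<rho>" "0 < e" "e \<le> dist x y"
  shows "\<rho> ((1 / e) *\<^sub>R (x - y)) = 0"
proof -
  have "norm ((1 / e) *\<^sub>R (x - y)) = dist x y / e"
    using assms(2) unfolding norm_scaleR dist_norm by simp
  then have "1 \<le> norm ((1 / e) *\<^sub>R (x - y))"
    using assms(2,3) by simp
  then show ?thesis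
    using assms(1) by (simp add: mollifier_def)
qed

definition mollifier_kernel :: "('a::euclidean_space \<Rightarrow> real) \<Rightarrow> ('a \<Rightarrow> real) \<Rightarrow> 'a \<times> 'a \<Rightarrow> real" where
  "mollifier_kernel \<rho> \<eta> p = C_coef \<rho> \<eta> (fst p) * \<rho> ((1 / \<eta> (fst p)) *\<^sub>R (fst p - snd p))"

lemma T_op_eq_kernel_integral: "T_op \<Omega> \<rho> \<eta> f = kernel_integral \<Omega> f (mollifier_kernel \<rho> \<eta>)"
  by (simp add: fun_eq_iff T_op_def kernel_integral_def mollifier_kernel_def mult.assoc)

lemma smooth_on_mollifier_kernel:
  fixes \<rho> \<eta> :: "'a::euclidean_space \<Rightarrow> real"
  assumes "open \<Omega>" "smooth_on UNIV \<rho>" "smooth_on UNIV \<eta>" "\<And>x. x \<in> \<Omega> \<Longrightarrow> \<eta> x > 0"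
  shows "smooth_on (\<Omega> \<times> UNIV) (mollifier_kernel \<rho> \<eta>)"
  unfolding smooth_on_iff_differentiable_up_to
proof
  fix k
  let ?S = "\<Omega> \<times> (UNIV :: 'a set)"
  have S: "open ?S"
    using assms(1) by (simp add: open_Times)
  have "differentiable_up_to k ?S (\<lambda>p. \<eta> (fst p))"
  proof (rule differentiable_up_to_compose[OF S open_UNIV, where G=fst and g=\<eta>])
    show "differentiable_up_to k UNIV \<eta>"
      using assms(3) by (simp add: smooth_on_iff_differentiable_up_to)
    show "differentiable_up_to k ?S (\<lambda>p. fst p \<bullet> j)" for j
      by (intro differentiable_up_to_bounded_linear bounded_linear_inner_left_comp bounded_linear_fst)
  qed simp
  then have inv: "differentiable_up_to k ?S (\<lambda>p. inverse (\<eta> (fst p)))"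
    using assms(4) by (intro differentiable_up_to_inverse[OF S]) (auto simp: less_imp_neq[symmetric])
  have "differentiable_up_to k ?S (\<lambda>p. \<rho> (inverse (\<eta> (fst p)) *\<^sub>R (fst p - snd p)))"
  proof (rule differentiable_up_to_compose[OF S open_UNIV, where g=\<rho>])
    show "differentiable_up_to k UNIV \<rho>"
      using assms(2) by (simp add: smooth_on_iff_differentiable_up_to)
    have "bounded_linear (\<lambda>p::'a \<times> 'a. (fst p - snd p) \<bullet> j)" for j
      by (intro bounded_linear_inner_left_comp bounded_linear_sub
            bounded_linear_fst bounded_linear_snd)
    then show "differentiable_up_to k ?S (\<lambda>p. inverse (\<eta> (fst p)) *\<^sub>R (fst p - snd p) \<bullet> j)" for j
      using differentiable_up_to_mult[OF S inv differentiable_up_to_bounded_linear] by simp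
  qed simp
  then have kernel: "differentiable_up_to k ?S
      (\<lambda>p. M_rho \<rho> * inverse (\<eta> (fst p)) ^ DIM('a) * \<rho> (inverse (\<eta> (fst p)) *\<^sub>R (fst p - snd p)))"
    by (intro differentiable_up_to_mult[OF S] differentiable_up_to_power[OF S inv]
          differentiable_up_to_const)
  show "differentiable_up_to k ?S (mollifier_kernel \<rho> \<eta>)"
    by (rule differentiable_up_to_cong[OF S _ kernel])
      (simp add: mollifier_kernel_def C_coef_def divide_inverse power_inverse)
qed

lemma smooth_kernel_mollifier_kernel:
  fixes \<Omega> :: "'a::euclidean_space set"
  assumes "open \<Omega>" "mollifier \<rho>" "reg_dist \<Omega> \<eta>"
  shows "smooth_kernel \<Omega> \<Omega> (mollifier_kernel \<rho> \<eta>)"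
  unfolding smooth_kernel_def
proof (intro conjI ballI)
  show "smooth_on (\<Omega> \<times> UNIV) (mollifier_kernel \<rho> \<eta>)"
    using assms reg_dist_pos[OF assms(1,3)]
    by (intro smooth_on_mollifier_kernel) (auto simp: mollifier_def reg_dist_def)
  fix x0 assume "x0 \<in> \<Omega>"
  define r where "r = (\<eta> x0 + infdist x0 (frontier \<Omega>)) / 2"
  have r: "\<eta> x0 < r" "r < infdist x0 (frontier \<Omega>)"
    using reg_dist_less_infdist[OF assms(1,3) \<open>x0 \<in> \<Omega>\<close>] by (auto simp: r_def)
  have "continuous_on UNIV \<eta>"
    using assms(3) by (simp add: reg_dist_def smooth_on_imp_continuous_on)
  then have "open {x. \<eta> x + dist x x0 < r}"
    by (intro open_Collect_less continuous_intros)
  then have "\<forall>\<^sub>F x in nhds x0. \<eta> x + dist x x0 < r"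
    using eventually_nhds_in_open r(1) by fastforce
  moreover have "\<forall>\<^sub>F x in nhds x0. x \<in> \<Omega>"
    using assms(1) \<open>x0 \<in> \<Omega>\<close> by (rule eventually_nhds_in_open)
  ultimately have "\<forall>\<^sub>F x in nhds x0. \<forall>y. y \<notin> cball x0 r \<longrightarrow> mollifier_kernel \<rho> \<eta> (x, y) = 0"
  proof eventually_elim
    case (elim x)
    show ?case
    proof (intro allI impI)
      fix y assume "y \<notin> cball x0 r"
      then have "\<eta> x \<le> dist x y"
        using elim(1) dist_triangle[of x0 y x] by (simp add: dist_commute)
      then show "mollifier_kernel \<rho> \<eta> (x, y) = 0"
        using mollifier_scaled_eq_0[OF assms(2) reg_dist_pos[OF assms(1,3) elim(2)]]
        by (simp add: mollifier_kernel_def)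
    qed
  qed
  then show "\<exists>B. compact B \<and> B \<subseteq> \<Omega> \<and> (\<forall>\<^sub>F x in nhds x0. \<forall>y. y \<notin> B \<longrightarrow> mollifier_kernel \<rho> \<eta> (x, y) = 0)"
    using cball_subset_of_infdist_frontier[OF \<open>x0 \<in> \<Omega>\<close> r(2)] compact_cball[of x0 r] by blast
qed

lemma test_fun_scaled_mollifier:
  fixes x :: "'a::euclidean_space"
  assumes "mollifier \<rho>" "0 < e" "cball x e \<subseteq> \<Omega>"
  shows "test_fun \<Omega> (\<lambda>y. \<rho> ((1 / e) *\<^sub>R (x - y)))" (is "test_fun \<Omega> ?\<phi>")
    and "test_fun \<Omega> (\<lambda>y. \<rho> ((1 / e) *\<^sub>R (x - y)) * ((y - x) \<bullet> j))"
proof -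
  have affine: "differentiable_up_to k UNIV (\<lambda>y. y \<bullet> v + c)" for k v and c :: real
    by (intro differentiable_up_to_add differentiable_up_to_bounded_linear bounded_linear_inner_left
        differentiable_up_to_const) simp
  have "differentiable_up_to k UNIV ?\<phi>" for k
  proof (rule differentiable_up_to_compose[OF open_UNIV open_UNIV, where g=\<rho>])
    show "differentiable_up_to k UNIV \<rho>"
      using assms(1) by (simp add: mollifier_def smooth_on_iff_differentiable_up_to)
    show "differentiable_up_to k UNIV (\<lambda>y. (1 / e) *\<^sub>R (x - y) \<bullet> l)" for l
      by (rule differentiable_up_to_cong[OF open_UNIV _
            affine[of k "- (1 / e) *\<^sub>R l" "(1 / e) * (x \<bullet> l)"]])
        (simp add: inner_diff_left algebra_simps)
  qed simp
  then have smooth: "smooth_on UNIV ?\<phi>"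
    by (simp add: smooth_on_iff_differentiable_up_to)
  have support: "y \<in> cball x e" if "?\<phi> y \<noteq> 0" for y
    using mollifier_scaled_eq_0[OF assms(1,2)] that by (force simp: dist_commute)
  show "test_fun \<Omega> ?\<phi>"
    using test_funI[OF smooth compact_cball assms(3)] support by blast
  have "differentiable_up_to k UNIV (\<lambda>y. (y - x) \<bullet> j)" for k
    by (rule differentiable_up_to_cong[OF open_UNIV _ affine[of k j "- (x \<bullet> j)"]])
      (simp add: inner_diff_left)
  then have "differentiable_up_to k UNIV (\<lambda>y. ?\<phi> y * ((y - x) \<bullet> j))" for k
    using \<open>\<And>k. differentiable_up_to k UNIV ?\<phi>\<close> by (intro differentiable_up_to_mult[OF open_UNIV])
  then show "test_fun \<Omega> (\<lambda>y. ?\<phi> y * ((y - x) \<bullet> j))"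
    using support by (intro test_funI[OF _ compact_cball assms(3)])
      (auto simp: smooth_on_iff_differentiable_up_to)
qed

lemma has_derivative_C_coef:
  fixes \<eta> :: "'a::euclidean_space \<Rightarrow> real"
  assumes "(\<eta> has_derivative D\<eta>) (at x)" "\<eta> x > 0"
  shows "(C_coef \<rho> \<eta> has_derivative (\<lambda>h. - real DIM('a) * C_coef \<rho> \<eta> x * D\<eta> h / \<eta> x)) (at x)"
proof (rule has_derivative_eq_rhs)
  let ?N = "DIM('a)"
  show "(C_coef \<rho> \<eta> has_derivative
      (\<lambda>h. (0 * \<eta> x ^ ?N - M_rho \<rho> * (of_nat ?N * D\<eta> h * \<eta> x ^ (?N - 1)))
          / (\<eta> x ^ ?N * \<eta> x ^ ?N))) (at x)"
    unfolding C_coef_def[abs_def] using assms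
    by (intro has_derivative_divide' has_derivative_const has_derivative_power) auto
  obtain m where "?N = Suc m"
    using DIM_positive not0_implies_Suc by blast
  then show "(\<lambda>h. (0 * \<eta> x ^ ?N - M_rho \<rho> * (of_nat ?N * D\<eta> h * \<eta> x ^ (?N - 1)))
      / (\<eta> x ^ ?N * \<eta> x ^ ?N))
      = (\<lambda>h. - real ?N * C_coef \<rho> \<eta> x * D\<eta> h / \<eta> x)"
    using assms(2) by (simp add: fun_eq_iff C_coef_def field_simps)
qed

lemma partial_deriv_fst_mollifier_kernel:
  fixes \<rho> \<eta> :: "'a::euclidean_space \<Rightarrow> real"
  assumes \<eta>: "(\<eta> has_derivative D\<eta>) (at x)" "\<eta> x > 0"
    and \<rho>: "(\<rho> has_derivative D\<rho>) (at ((1 / \<eta> x) *\<^sub>R (x - y)))"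
  defines "\<phi> \<equiv> \<lambda>y. \<rho> ((1 / \<eta> x) *\<^sub>R (x - y))"
  shows "partial_deriv (\<lambda>x. mollifier_kernel \<rho> \<eta> (x, y)) i x =
    - C_coef \<rho> \<eta> x * partial_deriv \<phi> i y
    - C_coef \<rho> \<eta> x * D\<eta> i / \<eta> x * (\<Sum>j\<in>Basis. partial_deriv (\<lambda>y. \<phi> y * ((y - x) \<bullet> j)) j y)"
proof -
  define e where "e = \<eta> x"
  define C where "C = C_coef \<rho> \<eta> x"
  have lin: "linear D\<rho>"
    using has_derivative_linear[OF \<rho>] .
  have "((\<lambda>x. (1 / \<eta> x) *\<^sub>R (x - y)) has_derivative
      (\<lambda>h. (1 / e) *\<^sub>R h - (D\<eta> h / e\<^sup>2) *\<^sub>R (x - y))) (at x)"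
    using \<eta> by (auto intro!: derivative_eq_intros simp: e_def fun_eq_iff field_simps power2_eq_square)
  from diff_chain_at[OF this \<rho>]
  have \<rho>_z: "((\<lambda>x. \<rho> ((1 / \<eta> x) *\<^sub>R (x - y))) has_derivative
      (\<lambda>h. D\<rho> ((1 / e) *\<^sub>R h - (D\<eta> h / e\<^sup>2) *\<^sub>R (x - y)))) (at x)"
    by (simp add: o_def)
  have C: "(C_coef \<rho> \<eta> has_derivative (\<lambda>h. - real DIM('a) * C * D\<eta> h / e)) (at x)"
    using has_derivative_C_coef[OF \<eta>] by (simp add: C_def e_def)
  have "partial_deriv (\<lambda>x. mollifier_kernel \<rho> \<eta> (x, y)) i x =
      - real DIM('a) * C * D\<eta> i / e * \<phi> y + C * D\<rho> ((1 / e) *\<^sub>R i - (D\<eta> i / e\<^sup>2) *\<^sub>R (x - y))"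
    using partial_deriv_at[OF has_derivative_mult[OF C \<rho>_z]] unfolding mollifier_kernel_def
    by (simp add: \<phi>_def C_def e_def)
  also have "D\<rho> ((1 / e) *\<^sub>R i - (D\<eta> i / e\<^sup>2) *\<^sub>R (x - y)) = D\<rho> i / e - D\<eta> i / e\<^sup>2 * D\<rho> (x - y)"
    by (simp add: linear_diff[OF lin] linear_scale[OF lin])
  finally have kernel: "partial_deriv (\<lambda>x. mollifier_kernel \<rho> \<eta> (x, y)) i x =
      - real DIM('a) * C * D\<eta> i / e * \<phi> y + C * (D\<rho> i / e - D\<eta> i / e\<^sup>2 * D\<rho> (x - y))" .
  have "((\<lambda>y. (1 / e) *\<^sub>R (x - y)) has_derivative (\<lambda>h. - (1 / e) *\<^sub>R h)) (at y)"
    by (auto intro!: derivative_eq_intros)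
  from diff_chain_at[OF this \<rho>[folded e_def]]
  have "(\<phi> has_derivative (\<lambda>h. D\<rho> (- (1 / e) *\<^sub>R h))) (at y)"
    by (simp add: o_def \<phi>_def e_def)
  then have \<phi>: "(\<phi> has_derivative (\<lambda>h. - D\<rho> h / e)) (at y)"
    by (simp add: linear_neg[OF lin] linear_scale[OF lin])
  have "(\<Sum>j\<in>Basis. partial_deriv (\<lambda>y. \<phi> y * ((y - x) \<bullet> j)) j y) = real DIM('a) * \<phi> y + D\<rho> (x - y) / e"
    using sum_partial_deriv_radial[OF \<phi>, of x] linear_diff[OF lin, of y x] linear_diff[OF lin, of x y]
    by simp
  then show ?thesis
    unfolding kernel partial_deriv_at[OF \<phi>] C_def[symmetric] e_def[symmetric]
    using \<eta>(2) by (simp add: e_def field_simps power2_eq_square)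
qed

lemma partial_deriv_mollifier_kernel:
  fixes \<Omega> :: "'a::euclidean_space set"
  assumes \<Omega>: "open \<Omega>" and \<rho>: "mollifier \<rho>" and \<eta>: "reg_dist \<Omega> \<eta>" and x: "x \<in> \<Omega>"
  defines "\<phi> \<equiv> \<lambda>y. \<rho> ((1 / \<eta> x) *\<^sub>R (x - y))"
  shows "partial_deriv (mollifier_kernel \<rho> \<eta>) (i, 0) (x, y) =
    - C_coef \<rho> \<eta> x * partial_deriv \<phi> i y
    - C_coef \<rho> \<eta> x * partial_deriv \<eta> i x / \<eta> x
      * (\<Sum>j\<in>Basis. partial_deriv (\<lambda>y. \<phi> y * ((y - x) \<bullet> j)) j y)"
proof -
  have smooth: "smooth_on UNIV \<rho>" "smooth_on UNIV \<eta>"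
    using \<rho> \<eta> by (simp_all add: mollifier_def reg_dist_def)
  have diff: "mollifier_kernel \<rho> \<eta> differentiable at (x, y)"
    using smooth_on_mollifier_kernel[OF \<Omega> smooth] reg_dist_pos[OF \<Omega> \<eta>] \<Omega> x
    by (intro smooth_on_imp_differentiable_at) (auto simp: open_Times)
  have d\<eta>: "(\<eta> has_derivative frechet_derivative \<eta> (at x)) (at x)"
    and d\<rho>: "(\<rho> has_derivative frechet_derivative \<rho> (at z)) (at z)" for z
    using smooth by (auto intro!: smooth_on_imp_differentiable_at
        simp: frechet_derivative_works[symmetric])
  show ?thesis
    using partial_deriv_fst_mollifier_kernel[OF d\<eta> reg_dist_pos[OF \<Omega> \<eta> x] d\<rho>, where y=y and i=i]
      partial_deriv_fst[OF diff, of i]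
    by (simp add: \<phi>_def partial_deriv_def)
qed

lemma kernel_integral_partial_deriv_mollifier_kernel:
  fixes \<Omega> :: "'a::euclidean_space set"
  assumes \<Omega>: "open \<Omega>" and \<rho>: "mollifier \<rho>" and \<eta>: "reg_dist \<Omega> \<eta>"
    and f: "BV_loc_with_deriv \<Omega> f \<mu> \<sigma>" and x: "x \<in> \<Omega>" and i: "i \<in> Basis"
  defines "\<phi> \<equiv> \<lambda>y. \<rho> ((1 / \<eta> x) *\<^sub>R (x - y))"
  shows "kernel_integral \<Omega> f (partial_deriv (mollifier_kernel \<rho> \<eta>) (i, 0)) x =
    C_coef \<rho> \<eta> x * (LINT y:\<Omega>|\<mu>. \<phi> y * (\<sigma> y \<bullet> i))
    + C_coef \<rho> \<eta> x / \<eta> x * (LINT y:\<Omega>|\<mu>. \<phi> y * ((y - x) \<bullet> \<sigma> y)) * partial_deriv \<eta> i x"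
proof -
  define C where "C = C_coef \<rho> \<eta> x"
  define c where "c = C * partial_deriv \<eta> i x / \<eta> x"
  define \<psi> where "\<psi> j y = \<phi> y * ((y - x) \<bullet> j)" for j y
  have "cball x (\<eta> x) \<subseteq> \<Omega>"
    by (rule cball_subset_of_infdist_frontier[OF x reg_dist_less_infdist[OF \<Omega> \<eta> x]])
  then have test: "test_fun \<Omega> \<phi>" "test_fun \<Omega> (\<psi> j)" for j
    using test_fun_scaled_mollifier[OF \<rho> reg_dist_pos[OF \<Omega> \<eta> x]]
      by (simp_all add: \<phi>_def \<psi>_def[abs_def])
  note int = set_integrable_test_fun_mult[OF test_fun_partial_deriv BV_loc_locally_integrable[OF f]]
  have a: "set_integrable lebesgue \<Omega> (\<lambda>y. f y * partial_deriv \<phi> i y)"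
    by (rule int[OF test(1) i])
  have b: "set_integrable lebesgue \<Omega> (\<lambda>y. f y * partial_deriv (\<psi> j) j y)" if "j \<in> Basis" for j
    by (rule int[OF test(2) that])
  have kernel: "partial_deriv (mollifier_kernel \<rho> \<eta>) (i, 0) (x, y)
      = - C * partial_deriv \<phi> i y - c * (\<Sum>j\<in>Basis. partial_deriv (\<psi> j) j y)" for y
    unfolding C_def c_def \<phi>_def \<psi>_def[abs_def] by (rule partial_deriv_mollifier_kernel[OF \<Omega> \<rho> \<eta> x])
  have "partial_deriv (mollifier_kernel \<rho> \<eta>) (i, 0) (x, y) * f y
      = (- C) * (f y * partial_deriv \<phi> i y) + (- c) * (\<Sum>j\<in>Basis. f y * partial_deriv (\<psi> j) j y)" for y
    unfolding kernel by (simp add: algebra_simps sum_distrib_left sum_negf)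
  then have "kernel_integral \<Omega> f (partial_deriv (mollifier_kernel \<rho> \<eta>) (i, 0)) x
      = (- C) * (LINT y:\<Omega>|lebesgue. f y * partial_deriv \<phi> i y)
      + (- c) * (\<Sum>j\<in>Basis. LINT y:\<Omega>|lebesgue. f y * partial_deriv (\<psi> j) j y)"
    by (simp only: kernel_integral_def set_integral_mult_right set_integral_sum[OF b]
        set_integral_add(2)[OF set_integrable_mult_right[OF a]
            set_integrable_mult_right[OF set_integrable_sum[OF b]]])
  also have "\<dots> = C * (LINT y:\<Omega>|\<mu>. \<phi> y * (\<sigma> y \<bullet> i))
      + c * (\<Sum>j\<in>Basis. LINT y:\<Omega>|\<mu>. \<phi> y * ((y - x) \<bullet> j) * (\<sigma> y \<bullet> j))"
    using BV_loc_integration_by_parts[OF f test(1) i] BV_loc_integration_by_parts[OF f test(2)]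
    by (simp add: sum_negf \<psi>_def)
  also have "(\<Sum>j\<in>Basis. LINT y:\<Omega>|\<mu>. \<phi> y * ((y - x) \<bullet> j) * (\<sigma> y \<bullet> j))
      = (LINT y:\<Omega>|\<mu>. \<phi> y * ((y - x) \<bullet> \<sigma> y))"
    using BV_loc_set_integrable_test_fun(2)[OF f test(2)]
    by (intro set_integral_inner_eq_sum_Basis[symmetric]) (simp add: \<psi>_def)
  finally show ?thesis
    by (simp add: C_def c_def)
qed

lemma gradient_T_op:
  fixes \<Omega> :: "'a::euclidean_space set"
  assumes \<Omega>: "open \<Omega>" and \<rho>: "mollifier \<rho>" and \<eta>: "reg_dist \<Omega> \<eta>"
    and f: "BV_loc_with_deriv \<Omega> f \<mu> \<sigma>" and x: "x \<in> \<Omega>"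
  shows "gradient (T_op \<Omega> \<rho> \<eta> f) x =
    C_coef \<rho> \<eta> x *\<^sub>R (LINT y:\<Omega>|\<mu>. \<rho> ((1 / \<eta> x) *\<^sub>R (x - y)) *\<^sub>R \<sigma> y)
    + (C_coef \<rho> \<eta> x / \<eta> x * (LINT y:\<Omega>|\<mu>. \<rho> ((1 / \<eta> x) *\<^sub>R (x - y)) * ((y - x) \<bullet> \<sigma> y)))
      *\<^sub>R gradient \<eta> x" (is "_ = ?rhs")
proof (rule euclidean_eqI)
  fix i :: 'a assume i: "i \<in> Basis"
  have "test_fun \<Omega> (\<lambda>y. \<rho> ((1 / \<eta> x) *\<^sub>R (x - y)))"
    using test_fun_scaled_mollifier(1)[OF \<rho> reg_dist_pos[OF \<Omega> \<eta> x]
        cball_subset_of_infdist_frontier[OF x reg_dist_less_infdist[OF \<Omega> \<eta> x]]] .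
  moreover note partial_deriv_kernel_integral[OF \<Omega> smooth_kernel_mollifier_kernel[OF \<Omega> \<rho> \<eta>]
      BV_loc_locally_integrable[OF f] x i]
  ultimately show "gradient (T_op \<Omega> \<rho> \<eta> f) x \<bullet> i = ?rhs \<bullet> i"
    using i BV_loc_set_integrable_test_fun(1)[OF f]
    by (simp add: gradient_inner_Basis T_op_eq_kernel_integral inner_add_left set_integral_inner_left
        kernel_integral_partial_deriv_mollifier_kernel[OF \<Omega> \<rho> \<eta> f x])
qed

theorem proposition4p1:
  fixes \<Omega> :: "'a::euclidean_space set"
    and \<rho> \<eta> f :: "'a \<Rightarrow> real"
    and \<mu> :: "'a measure" and \<sigma> :: "'a \<Rightarrow> 'a"
  assumes "open \<Omega>" and "bounded \<Omega>"
    and "mollifier \<rho>"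
    and "reg_dist \<Omega> \<eta>"
    and "BV_loc_with_deriv \<Omega> f \<mu> \<sigma>"
  shows "smooth_on \<Omega> (T_op \<Omega> \<rho> \<eta> f)
    \<and> (\<forall>x\<in>\<Omega>. (T_op \<Omega> \<rho> \<eta> f has_derivative (\<lambda>h.
         (C_coef \<rho> \<eta> x *\<^sub>R (LINT y:\<Omega>|\<mu>. \<rho> ((1 / \<eta> x) *\<^sub>R (x - y)) *\<^sub>R \<sigma> y)
          + (C_coef \<rho> \<eta> x / \<eta> x
             * (LINT y:\<Omega>|\<mu>. \<rho> ((1 / \<eta> x) *\<^sub>R (x - y)) * ((y - x) \<bullet> \<sigma> y))) *\<^sub>R gradient \<eta> x)
         \<bullet> h)) (at x))"
proof -
  have kernel: "smooth_kernel \<Omega> \<Omega> (mollifier_kernel \<rho> \<eta>)"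
    by (rule smooth_kernel_mollifier_kernel[OF assms(1,3,4)])
  note f = BV_loc_locally_integrable[OF assms(5)]
  have "smooth_on \<Omega> (T_op \<Omega> \<rho> \<eta> f)"
    unfolding T_op_eq_kernel_integral smooth_on_iff_differentiable_up_to
    using differentiable_up_to_kernel_integral[OF assms(1) f kernel] by blast
  moreover have "(T_op \<Omega> \<rho> \<eta> f has_derivative (\<lambda>h. gradient (T_op \<Omega> \<rho> \<eta> f) x \<bullet> h)) (at x)"
    if "x \<in> \<Omega>" for x
    using differentiable_kernel_integral[OF assms(1) kernel f that]
    by (simp add: T_op_eq_kernel_integral has_derivative_gradient)
  ultimately show ?thesis
    by (simp add: gradient_T_op[OF assms(1,3,4,5)])
qed

end
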